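(* Let $n\ge 2$ be an integer. (i) If $n\ne 4,5$, then every polynomial $f\in\mathbb{Z}[x]$ of degree $n$ that is reducible in $\mathbb{Q}[x]$ satisfies $P(f)\le n+2$. (ii) There exists a polynomial $f\in\mathbb{Z}[x]$ of degree $n$, reducible in $\mathbb{Q}[x]$, with $P(f)\ge n+1$. (iii) If $n=4$ or $n=5$, then the maximum of $P(f)$ over all polynomials $f\in\mathbb{Z}[x]$ of degree $n$ that are reducible in $\mathbb{Q}[x]$ is exactly $8$.
   Context: For a polynomial $f$ with rational coefficients, $P(f)=\#\{m\in\mathbb{Z}: f(m)\text{ is prime}\}$. Here "$f(m)$ is prime" means that $|f(m)|$ is a prime number, so negative primes $-p$ are counted. A polynomial is reducible in $\mathbb{Q}[x]$ if it is a product of two nonconstant polynomials with rational coefficients. *)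

theory Defs
  imports "HOL-Computational_Algebra.Computational_Algebra"
begin

definition prime_args :: "int poly \<Rightarrow> int set" where
  "prime_args f = {m::int. prime \<bar>poly f m\<bar>}"

text \<open>P(f) as in the paper (card of an infinite set would be 0, so the theorem
  states finiteness explicitly where needed).\<close>
definition P :: "int poly \<Rightarrow> nat" where
  "P f = card (prime_args f)"

definition reducible_Q :: "int poly \<Rightarrow> bool" where
  "reducible_Q f \<longleftrightarrow> (\<exists>g h :: rat poly. degree g \<ge> 1 \<and> degree h \<ge> 1 \<and>
      map_poly of_int f = g * h)"

end

theory Submission
  imports Defs "HOL-Number_Theory.Pocklington"
begin

(* If f = G H with both factors nonconstant and |f m| is prime, then |G m| = 1 or |H m| = 1.
   A polynomial of degree d takes each of the values 1 and -1 at most d times, and if it takes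
   both, all these arguments lie among four consecutive integers, as a - b divides G a - G b.
   So a factor of degree d accounts for at most min (2 d) (max d 4) prime arguments. For the two
   factors together this is at most n + 2, except for n = 4, 5, where it is 8, and for a linear
   times a quadratic factor, where six prime arguments would give four prime values of a linear
   polynomial in an arithmetic progression with difference at most 2.
   For the lower bounds take f = x (1 + c K), where K (1) = K (-1) and K vanishes at primes +-q
   (and at -2, 3, 5 when n is even): then f z = z at these roots, and f (+-1) = +-p as soon as
   c K (1) = p - 1. This needs a prime p = 1 (mod K (1)), the special case of Dirichlet's theorem
   that follows from a cyclotomic-type factor of x^m - 1. *)

section \<open>Rational factorisations are integral\<close>

lemma map_poly_of_int_mult:
  "map_poly (of_int :: int \<Rightarrow> 'a::comm_ring_1) (p * q) = map_poly of_int p * map_poly of_int q"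
  by (rule poly_eqI) (simp add: coeff_map_poly coeff_mult)

lemma map_poly_of_int_prod:
  "map_poly (of_int :: int \<Rightarrow> 'a::comm_ring_1) (\<Prod>i\<in>I. f i) = (\<Prod>i\<in>I. map_poly of_int (f i))"
  by (induct I rule: infinite_finite_induct) (simp_all add: map_poly_of_int_mult)

lemma degree_map_poly_of_int [simp]:
  "degree (map_poly (of_int :: int \<Rightarrow> 'a::{ring_char_0}) p) = degree p"
  by (rule degree_map_poly) simp

lemma map_poly_of_int_eq_iff [simp]:
  "map_poly (of_int :: int \<Rightarrow> 'a::ring_char_0) p = map_poly of_int q \<longleftrightarrow> p = q"
  by (auto simp: poly_eq_iff coeff_map_poly)

lemma rat_poly_clear_denominators:
  fixes g :: "rat poly"
  obtains d :: int and G where "d > 0" "map_poly of_int G = Polynomial.smult (of_int d) g"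
proof -
  have "\<exists>d::int. d > 0 \<and> (\<exists>G. map_poly of_int G = Polynomial.smult (of_int d) g)"
  proof (induct g)
    case 0
    show ?case by (intro exI[of _ 1]) (auto intro: exI[of _ 0])
  next
    case (pCons a g)
    then obtain d G where d: "d > 0" "map_poly of_int G = Polynomial.smult (of_int d) g" by auto
    obtain p q where pq: "quotient_of a = (p, q)" by force
    have q: "q > 0" and a: "a = of_int p / of_int q"
      using quotient_of_denom_pos[OF pq] quotient_of_div[OF pq] by simp_all
    have "map_poly of_int (pCons (d * p) (Polynomial.smult q G))
        = Polynomial.smult (of_int (q * d)) (pCons a g)"
      using d q by (simp add: map_poly_pCons map_poly_smult a field_simps)
    then show ?case using d q by (intro exI[of _ "q * d"]) auto
  qed
  then show thesis using that by blast
qed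

lemma int_poly_factor_from_rat:
  fixes f :: "int poly" and g h :: "rat poly"
  assumes fgh: "map_poly of_int f = g * h" and "f \<noteq> 0"
  obtains G H where "f = G * H" "degree G = degree g" "degree H = degree h"
proof -
  obtain d1 G1 where d1: "d1 > 0" "map_poly of_int G1 = Polynomial.smult (of_int d1) g"
    by (rule rat_poly_clear_denominators)
  obtain d2 H1 where d2: "d2 > 0" "map_poly of_int H1 = Polynomial.smult (of_int d2) h"
    by (rule rat_poly_clear_denominators)
  have "map_poly (of_int :: int \<Rightarrow> rat) (G1 * H1) = map_poly of_int (Polynomial.smult (d1 * d2) f)"
    by (simp add: map_poly_of_int_mult map_poly_smult d1 d2 fgh mult.commute)
  then have prod: "G1 * H1 = Polynomial.smult (d1 * d2) f" by simp
  have "Polynomial.smult (d1 * d2)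
          (Polynomial.smult (content f) (primitive_part G1 * primitive_part H1))
        = Polynomial.smult (content G1 * content H1) (primitive_part G1 * primitive_part H1)"
    using arg_cong[OF prod, of content] d1 d2 by (simp add: content_mult)
  also have "\<dots> = Polynomial.smult (d1 * d2) f"
    by (metis prod content_times_primitive_part mult_smult_left mult_smult_right smult_smult)
  finally have f: "f = Polynomial.smult (content f) (primitive_part G1 * primitive_part H1)"
    using d1 d2 smult_cancel[of "d1 * d2" f] by simp
  have "degree G1 = degree g" "degree H1 = degree h"
    using arg_cong[OF d1(2), of degree] arg_cong[OF d2(2), of degree] d1(1) d2(1) by simp_all
  show thesis
  proof (rule that)
    show "f = Polynomial.smult (content f) (primitive_part G1) * primitive_part H1"
      using f by simp
    show "degree (Polynomial.smult (content f) (primitive_part G1)) = degree g"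
      using \<open>degree G1 = degree g\<close> \<open>f \<noteq> 0\<close> by simp
    show "degree (primitive_part H1) = degree h"
      using \<open>degree H1 = degree h\<close> by simp
  qed
qed

lemma reducible_Q_mult:
  assumes "degree G \<ge> 1" "degree H \<ge> 1"
  shows "reducible_Q (G * H)"
  unfolding reducible_Q_def
  by (rule exI[of _ "map_poly of_int G"], rule exI[of _ "map_poly of_int H"])
     (use assms in \<open>simp add: map_poly_of_int_mult\<close>)

lemma reducible_QE:
  assumes "reducible_Q f"
  obtains G H where "f = G * H" "degree G \<ge> 1" "degree H \<ge> 1"
    "degree G + degree H = degree f"
proof -
  obtain g h :: "rat poly" where gh: "degree g \<ge> 1" "degree h \<ge> 1" "map_poly of_int f = g * h"
    using assms unfolding reducible_Q_def by blast
  then have "f \<noteq> 0" by auto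
  with gh obtain G H where GH: "f = G * H" "degree G = degree g" "degree H = degree h"
    using int_poly_factor_from_rat by metis
  with \<open>f \<noteq> 0\<close> have "degree f = degree G + degree H" by (simp add: degree_mult_eq)
  with that GH gh show thesis by simp
qed

section \<open>Values of integer polynomials\<close>

lemma poly_diff_dvd:
  fixes p :: "'a::comm_ring_1 poly"
  shows "(x - y) dvd (poly p x - poly p y)"
proof -
  have "[:-y, 1:] dvd p - [:poly p y:]" by (simp add: poly_eq_0_iff_dvd[symmetric])
  then obtain r where "p - [:poly p y:] = [:-y, 1:] * r" by (elim dvdE)
  from arg_cong[OF this, of "\<lambda>q. poly q x"]
  have "poly p x - poly p y = (x - y) * poly r x" by (simp add: algebra_simps)
  then show ?thesis by simp
qed

lemma poly_two_points_dvd: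
  fixes p :: "'a::idom poly"
  assumes "poly p u = poly p v" "u \<noteq> v"
  shows "(x - u) * (x - v) dvd (poly p x - poly p u)"
proof -
  have "[:-u, 1:] dvd p - [:poly p u:]" by (simp add: poly_eq_0_iff_dvd[symmetric])
  then obtain r where r: "p - [:poly p u:] = [:-u, 1:] * r" by (elim dvdE)
  from arg_cong[OF r, of "\<lambda>q. poly q v"] assms have "poly r v = 0" by simp
  then obtain s where s: "r = [:-v, 1:] * s" by (metis poly_eq_0_iff_dvd dvdE)
  from arg_cong[OF r, of "\<lambda>q. poly q x"]
  have "poly p x - poly p u = (x - u) * (x - v) * poly s x" by (simp add: s algebra_simps)
  then show ?thesis by simp
qed

lemma
  fixes p :: "'a::idom poly"
  assumes "degree p \<ge> 1"
  shows finite_poly_level_set: "finite {x. poly p x = c}"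
    and card_poly_level_set: "card {x. poly p x = c} \<le> degree p"
proof -
  have "degree (p + [:-c:]) = degree p"
    using assms by (intro degree_add_eq_left) simp
  then have deg: "degree (p - [:c:]) = degree p" by (simp add: diff_conv_add_uminus)
  then have "p - [:c:] \<noteq> 0" using assms by auto
  moreover have "{x. poly p x = c} = {x. poly (p - [:c:]) x = 0}" by simp
  ultimately show "finite {x. poly p x = c}" "card {x. poly p x = c} \<le> degree p"
    using poly_roots_finite[of "p - [:c:]"] card_poly_roots_bound[of "p - [:c:]"] deg by simp_all
qed

lemma poly_degree_1_eq:
  fixes G :: "'a::comm_semiring_1 poly"
  assumes "degree G = 1"
  shows "poly G x = Polynomial.coeff G 0 + Polynomial.coeff G 1 * x"
  using poly_altdef[of G x] assms by (simp add: atMost_Suc add.commute)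

section \<open>Upper bounds\<close>

definition unit_args :: "int poly \<Rightarrow> int set" where
  "unit_args G = {m. \<bar>poly G m\<bar> = 1}"

lemma unit_args_level_sets: "unit_args G = {m. poly G m = 1} \<union> {m. poly G m = -1}"
  by (auto simp: unit_args_def abs_eq_iff)

lemma prime_args_mult_subset: "prime_args (G * H) \<subseteq> unit_args G \<union> unit_args H"
proof
  fix m assume "m \<in> prime_args (G * H)"
  then have "prime_elem (poly G m * poly H m)" by (simp add: prime_args_def)
  then have "is_unit (poly G m) \<or> is_unit (poly H m)" by (rule prime_elem_multD)
  then show "m \<in> unit_args G \<union> unit_args H" by (auto simp: unit_args_def)
qed

lemma
  assumes "degree G \<ge> 1"
  shows finite_unit_args: "finite (unit_args G)"
    and card_unit_args_le_double: "card (unit_args G) \<le> 2 * degree G"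
proof -
  note fin = finite_poly_level_set[OF assms] and card = card_poly_level_set[OF assms]
  show "finite (unit_args G)" unfolding unit_args_level_sets using fin by simp
  show "card (unit_args G) \<le> 2 * degree G"
    unfolding unit_args_level_sets
    using card_Un_le[of "{m. poly G m = 1}" "{m. poly G m = -1}"] card[of 1] card[of "-1"]
    by linarith
qed

lemma finite_prime_args_reducible:
  assumes "reducible_Q f"
  shows "finite (prime_args f)"
proof -
  obtain G H where "f = G * H" "degree G \<ge> 1" "degree H \<ge> 1"
    using assms by (rule reducible_QE)
  then show ?thesis
    using prime_args_mult_subset finite_unit_args by (metis finite_Un finite_subset)
qed

lemma P_ge_card:
  assumes "reducible_Q f" "S \<subseteq> prime_args f"
  shows "card S \<le> P f"
  unfolding P_def using card_mono[OF finite_prime_args_reducible[OF assms(1)] assms(2)] .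

lemma unit_args_opposite_close:
  fixes G :: "int poly"
  assumes "\<bar>poly G b\<bar> = 1" "poly G a = - poly G b"
  shows "\<bar>a - b\<bar> \<le> 2"
proof -
  have "(a - b) dvd 2 * poly G a" using poly_diff_dvd[of a b G] assms(2) by simp
  moreover have "\<bar>2 * poly G a\<bar> = 2" using assms by simp
  ultimately show ?thesis using dvd_imp_le_int[of "2 * poly G a" "a - b"] by fastforce
qed

lemma unit_args_no_gap_4:
  fixes G :: "int poly"
  assumes "\<bar>poly G w\<bar> = 1" "poly G (w - 2) = - poly G w" "poly G (w + 2) = - poly G w"
  shows False
proof -
  have "(w - (w - 2)) * (w - (w + 2)) dvd poly G w - poly G (w - 2)"
    using assms(2,3) by (intro poly_two_points_dvd) simp_all
  then have "4 dvd 2 * poly G w" using assms(2) by simp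
  then show False using assms(1) by (auto simp: abs_if split: if_splits)
qed

lemma unit_args_diameter:
  assumes "poly G c = 1" "poly G d = -1" "x \<in> unit_args G" "y \<in> unit_args G"
  shows "\<bar>x - y\<bar> \<le> 3"
proof (cases "poly G x = poly G y")
  case False
  with assms(3,4) have "poly G x = - poly G y" by (auto simp: unit_args_def abs_eq_iff)
  then have "\<bar>x - y\<bar> \<le> 2"
    using assms(4) unit_args_opposite_close by (simp add: unit_args_def)
  then show ?thesis by simp
next
  case True
  have "poly G x = 1 \<or> poly G x = -1" using assms(3) by (auto simp: unit_args_def abs_eq_iff)
  then obtain w where w: "poly G w = - poly G x"
    using assms(1,2) by (metis minus_minus)
  have wx: "\<bar>x - w\<bar> \<le> 2" and wy: "\<bar>y - w\<bar> \<le> 2"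
    using unit_args_opposite_close[of G w] assms(3) w True by (auto simp: unit_args_def)
  show ?thesis
  proof (rule ccontr)
    assume "\<not> \<bar>x - y\<bar> \<le> 3"
    with wx wy have "{x, y} = {w - 2, w + 2}" by (auto simp: abs_le_iff)
    then have "poly G (w - 2) = - poly G w" "poly G (w + 2) = - poly G w"
      using w True by (auto simp: doubleton_eq_iff)
    moreover have "\<bar>poly G w\<bar> = 1" using w assms(3) by (simp add: unit_args_def)
    ultimately show False using unit_args_no_gap_4 by blast
  qed
qed

lemma int_set_diameter_subset_interval:
  fixes S :: "int set"
  assumes "S \<noteq> {}" "\<And>x y. x \<in> S \<Longrightarrow> y \<in> S \<Longrightarrow> \<bar>x - y\<bar> \<le> d"
  obtains m where "S \<subseteq> {m..m + d}"
proof -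
  obtain x where "x \<in> S" using assms(1) by blast
  then have "S \<subseteq> {x - d..x + d}" using assms(2) by (force simp: abs_le_iff)
  then have "finite S" by (rule finite_subset) simp
  have "y \<in> {Min S..Min S + d}" if "y \<in> S" for y
  proof -
    have "Min S \<le> y" using \<open>finite S\<close> that by simp
    moreover have "\<bar>y - Min S\<bar> \<le> d" using assms \<open>finite S\<close> that Min_in by blast
    ultimately show ?thesis by simp
  qed
  then show thesis using that by blast
qed

lemma unit_args_cases:
  assumes "degree G \<ge> 1"
  obtains "card (unit_args G) \<le> degree G" | m where "unit_args G \<subseteq> {m..m + 3}"
proof (cases "\<exists>c d. poly G c = 1 \<and> poly G d = -1")
  case True
  then obtain c d where "poly G c = 1" "poly G d = -1" by blast
  then have "\<bar>x - y\<bar> \<le> 3" if "x \<in> unit_args G" "y \<in> unit_args G" for x y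
    using unit_args_diameter that by blast
  moreover have "c \<in> unit_args G" using \<open>poly G c = 1\<close> by (simp add: unit_args_def)
  then have "unit_args G \<noteq> {}" by blast
  ultimately obtain m where "unit_args G \<subseteq> {m..m + 3}"
    using int_set_diameter_subset_interval[of "unit_args G" 3] by blast
  then show thesis by (rule that(2))
next
  case False
  then have "unit_args G = {m. poly G m = 1} \<or> unit_args G = {m. poly G m = -1}"
    unfolding unit_args_level_sets by auto
  then show thesis using that(1) card_poly_level_set[OF assms] by auto
qed

lemma card_unit_args_le_max_4:
  assumes "degree G \<ge> 1"
  shows "card (unit_args G) \<le> max (degree G) 4"
proof (cases rule: unit_args_cases[OF assms])
  case (2 m)
  then have "card (unit_args G) \<le> card {m..m + 3}" by (intro card_mono) simp_all
  then show ?thesis by simp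
qed simp

definition unit_args_bound :: "nat \<Rightarrow> nat" where
  "unit_args_bound d = min (2 * d) (max d 4)"

lemma P_mult_le:
  assumes "degree G \<ge> 1" "degree H \<ge> 1"
  shows "P (G * H) \<le> unit_args_bound (degree G) + unit_args_bound (degree H)"
proof -
  have "P (G * H) \<le> card (unit_args G \<union> unit_args H)"
    unfolding P_def using prime_args_mult_subset finite_unit_args assms by (intro card_mono) auto
  also have "\<dots> \<le> card (unit_args G) + card (unit_args H)" by (rule card_Un_le)
  also have "\<dots> \<le> unit_args_bound (degree G) + unit_args_bound (degree H)"
    using card_unit_args_le_double card_unit_args_le_max_4 assms
    by (intro add_mono) (simp_all add: unit_args_bound_def)
  finally show ?thesis .
qed

lemma prime_abs_small_divisors:
  fixes x :: int
  assumes "prime \<bar>x\<bar>"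
  shows "x \<noteq> 0 \<and> x \<noteq> 1 \<and> x \<noteq> -1 \<and> (2 dvd x \<longrightarrow> x = 2 \<or> x = -2) \<and> (3 dvd x \<longrightarrow> x = 3 \<or> x = -3)"
proof -
  have prime_divisor: "q = \<bar>x\<bar>" if "prime q" "q dvd x" for q :: int
    using that assms by (metis dvd_abs_iff primes_dvd_imp_eq)
  have "\<bar>x\<bar> \<ge> 2" using assms prime_ge_2_int by blast
  moreover have "\<bar>x\<bar> = 2" if "2 dvd x" using prime_divisor[of 2] that by simp
  moreover have "\<bar>x\<bar> = 3" if "3 dvd x" using prime_divisor[of 3] that by simp
  ultimately show ?thesis by auto
qed

lemma no_prime_arith_prog_4:
  fixes w u :: int
  assumes "u \<noteq> 0" "\<bar>u\<bar> \<le> 2"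
    and "prime \<bar>w\<bar>" "prime \<bar>w + u\<bar>" "prime \<bar>w + 2 * u\<bar>" "prime \<bar>w + 3 * u\<bar>"
  shows False
proof -
  note f = assms(3-6)[THEN prime_abs_small_divisors]
  have "u = -2 \<or> u = -1 \<or> u = 1 \<or> u = 2" using assms(1,2) by auto
  then show False using f by (elim disjE; presburger)
qed

lemma unit_args_eq_interval:
  assumes "degree G \<ge> 1" "degree G < 4" "card (unit_args G) = 4"
  obtains m where "unit_args G = {m..m + 3}"
proof (cases rule: unit_args_cases[OF assms(1)])
  case (2 m)
  moreover have "card {m..m + 3} = card (unit_args G)" using assms(3) by simp
  ultimately have "unit_args G = {m..m + 3}" by (intro card_subset_eq) simp_all
  then show thesis by (rule that)
qed (use assms in simp)

lemma abs_slope_le_2_if_unit_args: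
  fixes G :: "int poly"
  assumes "degree G = 1" "x \<in> unit_args G" "y \<in> unit_args G" "x \<noteq> y"
  shows "\<bar>Polynomial.coeff G 1\<bar> \<le> 2"
proof -
  let ?u = "Polynomial.coeff G 1"
  have "\<bar>?u\<bar> * \<bar>x - y\<bar> = \<bar>poly G x - poly G y\<bar>"
    using poly_degree_1_eq[OF assms(1)] by (simp add: abs_mult[symmetric] algebra_simps)
  also have "\<dots> \<le> 2" using assms(2,3) by (simp add: unit_args_def)
  finally have "\<bar>?u\<bar> * \<bar>x - y\<bar> \<le> 2" .
  moreover have "\<bar>?u\<bar> * 1 \<le> \<bar>?u\<bar> * \<bar>x - y\<bar>" using assms(4) by (intro mult_left_mono) simp_all
  ultimately show ?thesis by simp
qed

lemma linear_not_prime_on_4_consecutive: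
  fixes G :: "int poly"
  assumes "degree G = 1" "\<bar>Polynomial.coeff G 1\<bar> \<le> 2"
    and prime: "\<And>t. t \<in> {m..m + 3} \<Longrightarrow> prime \<bar>poly G t\<bar>"
  shows False
proof -
  define u where "u = Polynomial.coeff G 1"
  define w where "w = poly G m"
  have "u \<noteq> 0" using assms(1) leading_coeff_0_iff[of G] by (auto simp: u_def)
  have "poly G (m + i) = w + i * u" for i
    using poly_degree_1_eq[OF assms(1)] by (simp add: u_def w_def algebra_simps)
  then have "prime \<bar>w + i * u\<bar>" if "i \<in> {0, 1, 2, 3}" for i
    using prime[of "m + i"] that by auto
  from this[of 0] this[of 1] this[of 2] this[of 3]
  have "prime \<bar>w\<bar>" "prime \<bar>w + u\<bar>" "prime \<bar>w + 2 * u\<bar>" "prime \<bar>w + 3 * u\<bar>"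
    by simp_all
  with \<open>u \<noteq> 0\<close> assms(2) show False unfolding u_def by (rule no_prime_arith_prog_4)
qed

lemma P_linear_times_quadratic_le_5:
  fixes G H :: "int poly"
  assumes dG: "degree G = 1" and dH: "degree H = 2"
  shows "P (G * H) \<le> 5"
proof (rule ccontr)
  assume "\<not> P (G * H) \<le> 5"
  have fin: "finite (unit_args G)" "finite (unit_args H)"
    using finite_unit_args dG dH by simp_all
  have sub: "prime_args (G * H) \<subseteq> unit_args G \<union> unit_args H" by (rule prime_args_mult_subset)
  have "card (prime_args (G * H)) \<le> card (unit_args G \<union> unit_args H)"
    using sub fin by (intro card_mono) simp_all
  moreover have "card (unit_args G \<union> unit_args H) \<le> card (unit_args G) + card (unit_args H)"
    by (rule card_Un_le)
  moreover have "card (unit_args G) \<le> 2" "card (unit_args H) \<le> 4"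
    using card_unit_args_le_double[of G] card_unit_args_le_max_4[of H] dG dH by simp_all
  ultimately have cG: "card (unit_args G) = 2" and cH: "card (unit_args H) = 4"
    and "card (prime_args (G * H)) = card (unit_args G \<union> unit_args H)"
    using \<open>\<not> P (G * H) \<le> 5\<close> unfolding P_def by linarith+
  then have args: "prime_args (G * H) = unit_args G \<union> unit_args H"
    using sub fin by (intro card_subset_eq) simp_all
  obtain m where UH: "unit_args H = {m..m + 3}"
    using unit_args_eq_interval[of H] dH cH by force
  have "prime \<bar>poly G t\<bar>" if "t \<in> {m..m + 3}" for t
  proof -
    have "t \<in> prime_args (G * H)" "t \<in> unit_args H" using that args UH by simp_all
    then show ?thesis by (simp add: prime_args_def unit_args_def abs_mult)
  qed
  moreover obtain x y where "unit_args G = {x, y}" "x \<noteq> y" using cG card_2_iff by metis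
  then have "\<bar>Polynomial.coeff G 1\<bar> \<le> 2" using abs_slope_le_2_if_unit_args[OF dG] by blast
  ultimately show False using linear_not_prime_on_4_consecutive[OF dG] by blast
qed

lemma P_reducible_le:
  assumes "reducible_Q f" "degree f \<noteq> 4" "degree f \<noteq> 5"
  shows "P f \<le> degree f + 2"
proof -
  obtain G H where GH: "f = G * H" "degree G \<ge> 1" "degree H \<ge> 1"
    "degree G + degree H = degree f"
    using assms(1) by (rule reducible_QE)
  show ?thesis
  proof (cases "degree f = 3")
    case True
    then have "degree G = 1 \<and> degree H = 2 \<or> degree G = 2 \<and> degree H = 1" using GH by arith
    then show ?thesis
      using P_linear_times_quadratic_le_5[of G H] P_linear_times_quadratic_le_5[of H G] GH True
      by (auto simp: mult.commute)
  next
    case False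
    have "P f \<le> unit_args_bound (degree G) + unit_args_bound (degree H)"
      using P_mult_le[OF GH(2,3)] GH(1) by simp
    then show ?thesis
      using False GH(2-4) assms(2,3)
        by (auto simp: unit_args_bound_def min_def max_def split: if_splits)
  qed
qed

lemma P_reducible_le_8:
  assumes "reducible_Q f" "degree f \<le> 5"
  shows "P f \<le> 8"
proof -
  obtain G H where GH: "f = G * H" "degree G \<ge> 1" "degree H \<ge> 1"
    "degree G + degree H = degree f"
    using assms(1) by (rule reducible_QE)
  have "P f \<le> unit_args_bound (degree G) + unit_args_bound (degree H)"
    using P_mult_le[OF GH(2,3)] GH(1) by simp
  then show ?thesis
    using GH(2-4) assms(2) by (auto simp: unit_args_bound_def min_def max_def split: if_splits)
qed

section \<open>Primes congruent to 1\<close>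

lemma ord_eq_if_not_cong_div_prime:
  fixes n a A :: nat
  assumes "A > 0" "[a ^ A = 1] (mod n)"
    and "\<And>q. prime q \<Longrightarrow> q dvd A \<Longrightarrow> \<not> [a ^ (A div q) = 1] (mod n)"
  shows "ord n a = A"
proof (rule ccontr)
  assume "ord n a \<noteq> A"
  from assms(2) have "ord n a dvd A" by (rule ord_divides[THEN iffD1])
  then obtain k where k: "A = ord n a * k" by (elim dvdE)
  with \<open>ord n a \<noteq> A\<close> have "k \<noteq> 1" by auto
  then obtain q where q: "prime q" "q dvd k" using prime_factor_nat by blast
  then have "A div q = ord n a * (k div q)" using k by (simp add: div_mult_swap)
  then have "ord n a dvd A div q" by simp
  then have "[a ^ (A div q) = 1] (mod n)" by (rule ord_divides[THEN iffD2])
  moreover have "q dvd A" using q k by simp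
  ultimately show False using assms(3) q(1) by blast
qed

definition xpow_minus_one :: "nat \<Rightarrow> 'a::comm_ring_1 poly" where
  "xpow_minus_one k = Polynomial.monom 1 k - 1"

lemma poly_xpow_minus_one [simp]: "poly (xpow_minus_one k) x = x ^ k - 1"
  by (simp add: xpow_minus_one_def poly_monom)

lemma map_poly_of_int_xpow_minus_one [simp]:
  "map_poly of_int (xpow_minus_one k) = (xpow_minus_one k :: 'a::comm_ring_1 poly)"
  by (rule poly_eqI) (simp add: xpow_minus_one_def coeff_map_poly)

lemma xpow_minus_one_dvd:
  assumes "d dvd k"
  shows "xpow_minus_one d dvd xpow_minus_one k"
proof -
  obtain m where "k = d * m" using assms by (elim dvdE)
  then have "xpow_minus_one k = Polynomial.monom 1 d ^ m - 1"
    by (simp add: xpow_minus_one_def monom_power)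
  also have "\<dots> = (Polynomial.monom 1 d - 1) * (\<Sum>i<m. Polynomial.monom 1 d ^ i)"
    by (rule power_diff_1_eq)
  finally have "xpow_minus_one k = xpow_minus_one d * (\<Sum>i<m. Polynomial.monom 1 d ^ i)"
    by (simp add: xpow_minus_one_def)
  then show ?thesis by (rule dvdI)
qed

lemma cis_root_of_unity_pow_ne_1:
  assumes "0 < k" "k < A"
  shows "cis (2 * pi / real A) ^ k \<noteq> 1"
proof
  assume "cis (2 * pi / real A) ^ k = 1"
  then have "cos (real k * (2 * pi / real A)) = 1" by (simp add: DeMoivre complex_eq_iff)
  then obtain n :: int where "real k * (2 * pi / real A) = real_of_int n * 2 * pi"
    using cos_one_2pi_int by blast
  then have "real_of_int (int k) = real_of_int (n * int A)" using assms by (simp add: field_simps)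
  then have k_eq: "int k = n * int A" by (simp only: of_int_eq_iff)
  show False
  proof (cases "n \<le> 0")
    case True
    then have "n * int A \<le> 0" by (simp add: mult_nonpos_nonneg)
    then show False using k_eq assms by linarith
  next
    case False
    then have "1 * int A \<le> n * int A" by (intro mult_right_mono) simp_all
    then show False using k_eq assms by linarith
  qed
qed

lemma xpow_minus_one_not_dvd_prod:
  assumes "finite I" "A > 0" "\<And>i. i \<in> I \<Longrightarrow> 0 < e i \<and> e i < A"
  shows "\<not> xpow_minus_one A dvd (\<Prod>i\<in>I. xpow_minus_one (e i) :: int poly)"
proof
  assume "xpow_minus_one A dvd (\<Prod>i\<in>I. xpow_minus_one (e i) :: int poly)"
  then obtain K where K: "(\<Prod>i\<in>I. xpow_minus_one (e i)) = xpow_minus_one A * (K :: int poly)" ..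
  define z where "z = cis (2 * pi / real A)"
  have "(\<Prod>i\<in>I. z ^ e i - 1) = poly (map_poly of_int (\<Prod>i\<in>I. xpow_minus_one (e i))) z"
    by (simp add: map_poly_of_int_prod poly_prod)
  also have "\<dots> = (z ^ A - 1) * poly (map_poly of_int K) z"
    by (simp add: K map_poly_of_int_mult)
  also have "z ^ A = 1" using assms(2) by (simp add: z_def DeMoivre)
  finally obtain i where "i \<in> I" "z ^ e i = 1" using assms(1) by auto
  then show False using assms(3) cis_root_of_unity_pow_ne_1 unfolding z_def by blast
qed

text \<open>\<open>R\<close> is the cyclotomic polynomial \<open>\<Phi>\<^sub>A\<close> up to sign, but only its nonconstancy
  and the divisibility of \<open>P\<close> are needed.\<close>
lemma xpow_minus_one_cofactor:
  assumes "A > 0"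
  obtains P R :: "int poly" where "xpow_minus_one A = P * R" "degree R \<ge> 1"
    "\<And>q. prime q \<Longrightarrow> q dvd A \<Longrightarrow> xpow_minus_one (A div q) dvd P"
proof -
  define X :: "int poly" where "X = xpow_minus_one A"
  define Pi :: "int poly" where "Pi = (\<Prod>q\<in>prime_factors A. xpow_minus_one (A div q))"
  define P where "P = gcd X Pi"
  have small: "0 < A div q \<and> A div q < A" if "q \<in> prime_factors A" for q
    using that assms prime_gt_1_nat[of q]
      by (auto simp: in_prime_factors_iff intro: div_less_dividend)
  have "\<not> X dvd Pi" unfolding X_def Pi_def
    by (rule xpow_minus_one_not_dvd_prod) (use assms small in simp_all)
  have "P dvd X" by (simp add: P_def)
  then obtain R where XPR: "X = P * R" by (elim dvdE)
  have P_multiple: "xpow_minus_one (A div q) dvd P" if "prime q" "q dvd A" for q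
  proof -
    have "q \<in> prime_factors A" using that assms by (simp add: in_prime_factors_iff)
    then have "xpow_minus_one (A div q) dvd Pi" unfolding Pi_def by (intro dvd_prodI) simp_all
    moreover have "xpow_minus_one (A div q) dvd X"
      unfolding X_def
        using that by (intro xpow_minus_one_dvd) (metis dvd_div_mult_self dvd_triv_left)
    ultimately show ?thesis unfolding P_def by (rule gcd_greatest[rotated])
  qed
  have "degree R \<ge> 1"
  proof (rule ccontr)
    assume "\<not> degree R \<ge> 1"
    then have R_const: "R = [:Polynomial.coeff R 0:]" by (simp add: degree_0_id)
    have "Polynomial.coeff X 0 = -1" using assms by (simp add: X_def xpow_minus_one_def)
    then have "Polynomial.coeff R 0 dvd 1"
      using XPR by (metis coeff_mult_0 dvd_minus_iff dvd_triv_right)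
    then have "is_unit R" by (subst R_const) (simp add: is_unit_const_poly_iff)
    then have "X dvd P" using XPR by (simp add: mult_unit_dvd_iff)
    then have "X dvd Pi" by (simp add: P_def)
    with \<open>\<not> X dvd Pi\<close> show False ..
  qed
  then show thesis using that XPR P_multiple unfolding X_def by blast
qed

lemma finite_poly_abs_le_1:
  fixes R :: "int poly"
  assumes "degree R \<ge> 1"
  shows "finite {x. \<bar>poly R x\<bar> \<le> 1}"
proof -
  have "{x. \<bar>poly R x\<bar> \<le> 1} = {x. poly R x = -1} \<union> {x. poly R x = 0} \<union> {x. poly R x = 1}"
    by auto
  then show ?thesis using finite_poly_level_set[OF assms] by simp
qed

text \<open>If \<open>p\<close> divided \<open>b - 1\<close> for \<open>b = a ^ (A div q)\<close>, it would also divide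
  \<open>(b ^ q - 1) / (b - 1) = 1 + b + \<dots> + b ^ (q - 1) \<equiv> q\<close>, so \<open>p = q\<close> would divide \<open>a\<close>.\<close>
lemma ord_prime_divisor_of_cofactor:
  fixes P R :: "int poly" and a p :: nat
  assumes X: "xpow_minus_one A = P * R"
    and P: "\<And>q. prime q \<Longrightarrow> q dvd A \<Longrightarrow> xpow_minus_one (A div q) dvd P"
    and "A > 0" "A dvd a" "a \<ge> 2" "prime p" "int p dvd poly R (int a)"
  shows "ord p a = A"
proof (rule ord_eq_if_not_cong_div_prime[OF \<open>A > 0\<close>])
  have "int p dvd int a ^ A - 1" using arg_cong[OF X, of "\<lambda>f. poly f (int a)"] assms(7) by simp
  then show a_pow: "[a ^ A = 1] (mod p)" by (simp add: cong_iff_dvd_diff flip: cong_int_iff)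
  fix q :: nat assume q: "prime q" "q dvd A"
  show "\<not> [a ^ (A div q) = 1] (mod p)"
  proof
    assume "[a ^ (A div q) = 1] (mod p)"
    define b where "b = int a ^ (A div q)"
    have "[b = 1] (mod int p)"
      using \<open>[a ^ (A div q) = 1] (mod p)\<close> by (simp add: b_def flip: cong_int_iff)
    define Y where "Y = (\<Sum>i<q. b ^ i)"
    have "int a ^ A = b ^ q" using q(2) by (simp add: b_def flip: power_mult)
    then have "int a ^ A - 1 = (b - 1) * Y" by (simp add: Y_def power_diff_1_eq)
    moreover obtain M where "P = xpow_minus_one (A div q) * M" using P[OF q] by (elim dvdE)
    then have "int a ^ A - 1 = (b - 1) * (poly M (int a) * poly R (int a))"
      using arg_cong[OF X, of "\<lambda>f. poly f (int a)"] by (simp add: b_def)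
    moreover have "b \<ge> 2"
    proof -
      have "A div q > 0" using q \<open>A > 0\<close> prime_gt_0_nat[of q]
        by (simp add: div_greater_zero_iff dvd_imp_le)
      then have "int a ^ 1 \<le> b" unfolding b_def using \<open>a \<ge> 2\<close> by (intro power_increasing) simp_all
      then show ?thesis using \<open>a \<ge> 2\<close> by simp
    qed
    ultimately have "Y = poly M (int a) * poly R (int a)" by simp
    then have "int p dvd Y" using assms(7) by simp
    moreover have "[Y = (\<Sum>i<q. 1 ^ i)] (mod int p)"
      unfolding Y_def using \<open>[b = 1] (mod int p)\<close> by (intro cong_sum cong_pow)
    ultimately have "int p dvd int q" by (simp add: cong_dvd_iff)
    then have "p = q" using \<open>prime p\<close> q(1) by (simp add: primes_dvd_imp_eq)
    then have "p dvd a" using q(2) \<open>A dvd a\<close> by (metis dvd_trans)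
    then have "p dvd a ^ A" using \<open>A > 0\<close> dvd_power[of A a] dvd_trans by blast
    then show False using a_pow \<open>prime p\<close> by (simp add: cong_0_iff cong_dvd_iff)
  qed
qed

lemma exists_prime_1_mod:
  fixes A :: nat
  assumes "A > 0"
  shows "\<exists>p. prime p \<and> A dvd p - 1"
proof -
  obtain P R :: "int poly" where X: "xpow_minus_one A = P * R" and R: "degree R \<ge> 1"
    and P: "\<And>q. prime q \<Longrightarrow> q dvd A \<Longrightarrow> xpow_minus_one (A div q) dvd P"
    using xpow_minus_one_cofactor[OF assms] by metis
  define S where "S = (\<lambda>t. int (A * t)) -` {x. \<bar>poly R x\<bar> \<le> 1}"
  have "finite S" unfolding S_def
    using finite_poly_abs_le_1[OF R] assms by (intro finite_vimageI) (auto simp: inj_def)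
  then obtain t where t: "t \<notin> S \<union> {0, 1}"
    using ex_new_if_finite[OF infinite_UNIV_nat, of "S \<union> {0, 1}"] by auto
  define a where "a = A * t"
  have "1 * 2 \<le> a" unfolding a_def using assms t by (intro mult_le_mono) auto
  then have "a \<ge> 2" by simp
  have "\<bar>poly R (int a)\<bar> > 1" using t by (simp add: S_def a_def)
  then have "nat \<bar>poly R (int a)\<bar> \<noteq> 1" by linarith
  then obtain p where p: "prime p" "p dvd nat \<bar>poly R (int a)\<bar>"
    using prime_factor_nat by blast
  then have "int p dvd poly R (int a)" by simp
  then have ord: "ord p a = A"
    using ord_prime_divisor_of_cofactor[OF X P assms _ \<open>a \<ge> 2\<close> p(1)] by (simp add: a_def)
  then have "coprime p a" using assms ord_gt_0_iff[of p a] by simp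
  then have "A dvd totient p" using order_divides_totient[of p a] ord by simp
  then show ?thesis using p(1) totient_prime[of p] by auto
qed

section \<open>Constructions\<close>

lemma exists_P_ge_card_prime_roots:
  fixes K :: "int poly" and Z :: "int set"
  assumes K: "degree K \<ge> 1" "poly K (-1) = poly K 1" "poly K 1 \<noteq> 0"
    and Z: "finite Z" "\<And>z. z \<in> Z \<Longrightarrow> poly K z = 0 \<and> prime \<bar>z\<bar>"
  shows "\<exists>f. degree f = degree K + 1 \<and> reducible_Q f \<and> card Z + 2 \<le> P f"
proof -
  obtain p where p: "prime p" "nat \<bar>poly K 1\<bar> dvd p - 1"
    using exists_prime_1_mod[of "nat \<bar>poly K 1\<bar>"] K(3) by auto
  have "int (nat \<bar>poly K 1\<bar>) dvd int (p - 1)" using p(2) by (simp only: int_dvd_int_iff)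
  moreover have "int (p - 1) = int p - 1" using prime_ge_1_nat[OF p(1)] by simp
  ultimately have "poly K 1 dvd int p - 1" by simp
  then obtain c where "int p - 1 = poly K 1 * c" by (elim dvdE)
  then have c: "int p = 1 + poly K 1 * c" by simp
  have "c \<noteq> 0" using c prime_ge_2_nat[OF p(1)] by auto
  define H where "H = 1 + Polynomial.smult c K"
  define f where "f = [:0, 1:] * H"
  have poly_f: "poly f x = x * (1 + c * poly K x)" for x by (simp add: f_def H_def)
  have "degree H = degree K"
    unfolding H_def using K(1) \<open>c \<noteq> 0\<close> by (subst degree_add_eq_right) simp_all
  moreover have "H \<noteq> 0" using calculation K(1) by auto
  ultimately have deg: "degree f = degree K + 1" and red: "reducible_Q f"
    using K(1) unfolding f_def
      by (simp_all add: degree_mult_eq reducible_Q_mult del: mult_pCons_left)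
  have "poly f 1 = int p" "poly f (-1) = - int p"
    using c K(2) by (simp_all add: poly_f mult.commute)
  then have "{1, -1} \<subseteq> prime_args f" using p(1) by (simp add: prime_args_def)
  moreover have "Z \<subseteq> prime_args f" using Z(2) by (simp add: prime_args_def poly_f subset_iff)
  moreover have "1 \<notin> Z" "-1 \<notin> Z" using Z(2)[of 1] Z(2)[of "-1"] by auto
  then have "card (Z \<union> {1, -1}) = card Z + 2" using Z(1) by simp
  ultimately have "card Z + 2 \<le> P f" using P_ge_card[OF red, of "Z \<union> {1, -1}"] by simp
  then show ?thesis using deg red by blast
qed

definition pm_roots_poly :: "int set \<Rightarrow> int poly" where
  "pm_roots_poly Q = (\<Prod>q\<in>Q. [:- (q * q), 0, 1:])"

lemma poly_pm_roots_poly: "poly (pm_roots_poly Q) x = (\<Prod>q\<in>Q. x * x - q * q)"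
  by (simp add: pm_roots_poly_def poly_prod)

lemma degree_pm_roots_poly: "finite Q \<Longrightarrow> degree (pm_roots_poly Q) = 2 * card Q"
  by (simp add: pm_roots_poly_def degree_prod_eq_sum_degree)

lemma poly_pm_roots_poly_eq_0:
  assumes "finite Q" "\<bar>z\<bar> \<in> Q"
  shows "poly (pm_roots_poly Q) z = 0"
proof -
  have "z * z - \<bar>z\<bar> * \<bar>z\<bar> = 0" by simp
  then show ?thesis
    using assms by (auto simp: poly_pm_roots_poly intro!: prod_zero bexI[of _ "\<bar>z\<bar>"])
qed

lemma poly_pm_roots_poly_1:
  assumes "finite Q" "\<And>q. q \<in> Q \<Longrightarrow> q \<ge> 2"
  shows "poly (pm_roots_poly Q) (-1) = poly (pm_roots_poly Q) 1" "poly (pm_roots_poly Q) 1 \<noteq> 0"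
proof -
  have "1 - q * q \<noteq> 0" if "q \<in> Q" for q :: int
  proof -
    have "2 * 2 \<le> q * q" using assms(2)[OF that] mult_mono[of 2 q 2 q] by simp
    then show ?thesis by linarith
  qed
  then show "poly (pm_roots_poly Q) (-1) = poly (pm_roots_poly Q) 1" "poly (pm_roots_poly Q) 1 \<noteq> 0"
    using assms(1) by (simp_all add: poly_pm_roots_poly)
qed

lemma card_Un_uminus_image:
  fixes Q :: "int set"
  assumes "finite Q" "\<And>q. q \<in> Q \<Longrightarrow> q > 0"
  shows "card (Q \<union> uminus ` Q) = 2 * card Q"
proof -
  have "x \<notin> uminus ` Q" if "x \<in> Q" for x
  proof
    assume "x \<in> uminus ` Q"
    then obtain q where "q \<in> Q" "x = - q" by blast
    then show False using assms(2)[OF \<open>q \<in> Q\<close>] assms(2)[OF \<open>x \<in> Q\<close>] by simp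
  qed
  then have "Q \<inter> uminus ` Q = {}" by blast
  then show ?thesis using assms(1) by (simp add: card_Un_disjoint card_image)
qed

lemma exists_large_primes:
  "\<exists>Q :: int set. finite Q \<and> card Q = k \<and> (\<forall>q\<in>Q. prime q \<and> q \<ge> 7)"
proof -
  have "infinite ({p :: nat. prime p} - {..6})"
    using primes_infinite by (intro Diff_infinite_finite) simp_all
  then obtain B :: "nat set" where B: "B \<subseteq> {p. prime p} - {..6}" "finite B" "card B = k"
    using infinite_arbitrarily_large by blast
  have "card (int ` B) = k" using B by (simp add: card_image)
  moreover have "\<forall>q\<in>int ` B. prime q \<and> q \<ge> 7" using B(1) by auto
  ultimately show ?thesis using B(2) by (intro exI[of _ "int ` B"]) simp
qed

text \<open>The primes \<open>q \<ge> 7\<close> keep the roots \<open>\<plusminus>q\<close> of \<open>pm_roots_poly Q\<close> apart from the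
  small roots of \<open>T\<close>.\<close>
lemma exists_P_ge_from_small_roots:
  fixes T :: "int poly" and R :: "int set"
  assumes T: "T \<noteq> 0" "poly T (-1) = poly T 1" "poly T 1 \<noteq> 0" "degree T + 2 * k \<ge> 1"
    and R: "finite R" "\<And>r. r \<in> R \<Longrightarrow> poly T r = 0 \<and> prime \<bar>r\<bar> \<and> \<bar>r\<bar> < 7"
  shows "\<exists>f. degree f = degree T + 2 * k + 1 \<and> reducible_Q f \<and> card R + 2 * k + 2 \<le> P f"
proof -
  obtain Q :: "int set" where Q: "finite Q" "card Q = k" "\<And>q. q \<in> Q \<Longrightarrow> prime q \<and> q \<ge> 7"
    using exists_large_primes[of k] by blast
  define K where "K = T * pm_roots_poly Q"
  define Z where "Z = R \<union> (Q \<union> uminus ` Q)"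
  have "pm_roots_poly Q \<noteq> 0" using Q(1) by (simp add: pm_roots_poly_def)
  then have "degree K = degree T + 2 * k"
    using T(1) Q by (simp add: K_def degree_mult_eq degree_pm_roots_poly)
  moreover have "poly K (-1) = poly K 1" "poly K 1 \<noteq> 0"
    using T(2,3) poly_pm_roots_poly_1[OF Q(1)] Q(3) by (force simp: K_def)+
  moreover have "poly K z = 0 \<and> prime \<bar>z\<bar>" if z: "z \<in> Z" for z
  proof (cases "z \<in> R")
    case False
    then have "z \<in> Q \<or> - z \<in> Q" using z by (auto simp: Z_def)
    then have "\<bar>z\<bar> \<in> Q" using Q(3)[of z] Q(3)[of "- z"] by (cases "z \<ge> 0") auto
    then show ?thesis using poly_pm_roots_poly_eq_0[OF Q(1)] Q(3) by (simp add: K_def)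
  qed (use R(2) in \<open>simp add: K_def\<close>)
  moreover have "card Z = card R + 2 * k"
  proof -
    have "\<bar>z\<bar> \<ge> 7" if z: "z \<in> Q \<union> uminus ` Q" for z
    proof -
      obtain q where "q \<in> Q" "z = q \<or> z = - q" using z by blast
      then show ?thesis using Q(3)[of q] by auto
    qed
    moreover have "\<bar>r\<bar> < 7" if "r \<in> R" for r using R(2)[OF that] by simp
    ultimately have "R \<inter> (Q \<union> uminus ` Q) = {}" by force
    moreover have "card (Q \<union> uminus ` Q) = 2 * k"
      using card_Un_uminus_image[OF Q(1)] Q(2,3) by force
    ultimately show ?thesis using R(1) Q(1) by (simp add: Z_def card_Un_disjoint)
  qed
  ultimately show ?thesis
    using exists_P_ge_card_prime_roots[of K Z] T(4) R(1) Q(1) by (simp add: Z_def)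
qed

lemma exists_degree_2_P_ge_3: "\<exists>f. degree f = 2 \<and> reducible_Q f \<and> 3 \<le> P f"
proof -
  define f :: "int poly" where "f = [:0, 1:] * [:4, 1:]"
  have "degree f = 2" by (simp add: f_def)
  moreover have "reducible_Q f" unfolding f_def by (rule reducible_Q_mult) simp_all
  moreover have "{-5, -3, -1, 1} \<subseteq> prime_args f" by (simp add: f_def prime_args_def)
  ultimately show ?thesis using P_ge_card[of f "{-5, -3, -1, 1}"] by auto
qed

lemma exists_P_ge_degree_plus_1:
  assumes "n \<ge> 2"
  shows "\<exists>f. degree f = n \<and> reducible_Q f \<and> n + 1 \<le> P f"
proof -
  have "n = 2 \<or> (\<exists>k. n = 2 * k + 1 \<and> k \<ge> 1) \<or> (\<exists>k. n = 2 * k + 4)"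
    using assms by presburger
  then consider "n = 2" | k where "n = 2 * k + 1" "k \<ge> 1" | k where "n = 2 * k + 4"
    by blast
  then show ?thesis
  proof cases
    case 1
    then show ?thesis using exists_degree_2_P_ge_3 by simp
  next
    case (2 k)
    then obtain f where "degree f = 2 * k + 1" "reducible_Q f" "2 * k + 2 \<le> P f"
      using exists_P_ge_from_small_roots[of 1 k "{}"] by auto
    then show ?thesis using 2 by (intro exI[of _ f]) simp
  next
    case (3 k)
    define T :: "int poly" where "T = [:30, -1, -6, 1:]"
    have "poly T x = (x + 2) * (x - 3) * (x - 5)" for x by (simp add: T_def algebra_simps)
    then have "r \<in> {-2, 3, 5} \<Longrightarrow> poly T r = 0 \<and> prime \<bar>r\<bar> \<and> \<bar>r\<bar> < 7" for r :: int
      by auto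
    then obtain f where "degree f = degree T + 2 * k + 1" "reducible_Q f"
      "card {-2, 3, 5 :: int} + 2 * k + 2 \<le> P f"
      using exists_P_ge_from_small_roots[of T k "{-2, 3, 5}"] by (auto simp: T_def)
    moreover have "degree T = 3" by (simp add: T_def)
    ultimately show ?thesis using 3 by (intro exI[of _ f]) simp
  qed
qed

lemma P_eq_8_if_degree_le_5:
  assumes "reducible_Q f" "degree f \<le> 5" "{0..7} \<subseteq> prime_args f"
  shows "P f = 8"
proof -
  have "8 \<le> P f" using P_ge_card[OF assms(1,3)] by simp
  then show ?thesis using P_reducible_le_8[OF assms(1,2)] by simp
qed

lemma exists_degree_4_P_eq_8: "\<exists>f. degree f = 4 \<and> reducible_Q f \<and> P f = 8"
proof -
  define f :: "int poly" where "f = [:1, -3, 1:] * [:29, -11, 1:]"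
  have "degree f = 4" by (simp add: f_def)
  moreover have "reducible_Q f" unfolding f_def by (rule reducible_Q_mult) simp_all
  moreover have "{0..7} \<subseteq> prime_args f"
  proof -
    have "{0..7} = {0, 1, 2, 3, 4, 5, 6, 7 :: int}" by auto
    then show ?thesis by (simp add: f_def prime_args_def)
  qed
  ultimately show ?thesis using P_eq_8_if_degree_le_5 by auto
qed

lemma exists_degree_5_P_eq_8: "\<exists>f. degree f = 5 \<and> reducible_Q f \<and> P f = 8"
proof -
  define f :: "int poly" where "f = [:1, -3, 1:] * [:-139, 83, -16, 1:]"
  have "degree f = 5" by (simp add: f_def)
  moreover have "reducible_Q f" unfolding f_def by (rule reducible_Q_mult) simp_all
  moreover have "{0..7} \<subseteq> prime_args f"
  proof -
    have "{0..7} = {0, 1, 2, 3, 4, 5, 6, 7 :: int}" by auto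
    then show ?thesis by (simp add: f_def prime_args_def)
  qed
  ultimately show ?thesis using P_eq_8_if_degree_le_5 by auto
qed

theorem theorem1:
  fixes n :: nat
  assumes "n \<ge> 2"
  shows "(n \<noteq> 4 \<and> n \<noteq> 5 \<longrightarrow>
            (\<forall>f :: int poly. degree f = n \<and> reducible_Q f \<longrightarrow>
               finite (prime_args f) \<and> P f \<le> n + 2))
       \<and> (\<exists>f :: int poly. degree f = n \<and> reducible_Q f \<and>
               finite (prime_args f) \<and> P f \<ge> n + 1)
       \<and> (n = 4 \<or> n = 5 \<longrightarrow>
            (\<forall>f :: int poly. degree f = n \<and> reducible_Q f \<longrightarrow>
               finite (prime_args f) \<and> P f \<le> 8)
          \<and> (\<exists>f :: int poly. degree f = n \<and> reducible_Q f \<and>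
               finite (prime_args f) \<and> P f = 8))"
proof -
  have upper: "finite (prime_args f) \<and> P f \<le> n + 2"
    if "n \<noteq> 4" "n \<noteq> 5" "degree f = n" "reducible_Q f" for f
    using that finite_prime_args_reducible P_reducible_le by blast
  have upper_8: "finite (prime_args f) \<and> P f \<le> 8"
    if "n = 4 \<or> n = 5" "degree f = n" "reducible_Q f" for f
    using that finite_prime_args_reducible P_reducible_le_8 by force
  have lower: "\<exists>f. degree f = n \<and> reducible_Q f \<and> finite (prime_args f) \<and> P f \<ge> n + 1"
    using exists_P_ge_degree_plus_1[OF assms] finite_prime_args_reducible by blast
  have extremal: "\<exists>f. degree f = n \<and> reducible_Q f \<and> finite (prime_args f) \<and> P f = 8"
    if "n = 4 \<or> n = 5"
    using that exists_degree_4_P_eq_8 exists_degree_5_P_eq_8 finite_prime_args_reducible by blast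
  show ?thesis using upper upper_8 lower extremal by blast
qed

end
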